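(* For all $x\in[0,1/4]$ we have $c_{3,3}(x) = 1/4 - x$.
   Context: For a graph $G$, $k_3(G)$ is the number of triangles in $G$ and $\overline{G}$ the complement. A pair $(x,y)\in[0,1]^2$ is realised by a sequence of graphs $(G_n)_{n\in\mathbb{N}}$ with $G_n$ of order $n$ if $\lim_{n\to\infty} k_3(\overline{G_n})/\binom{n}{3} = x$ and $\lim_{n\to\infty} k_3(G_n)/\binom{n}{3} = y$. $\Omega_{3,3}$ is the set of all realised pairs and $c_{3,3}(x) = \inf\{y : (x,y)\in\Omega_{3,3}\}$. *)

theory Defs
  imports Complex_Main
begin

definition simple_graph_on :: "nat \<Rightarrow> (nat \<Rightarrow> nat \<Rightarrow> bool) \<Rightarrow> bool" where
  "simple_graph_on n E \<longleftrightarrow>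
     (\<forall>u<n. \<not> E u u) \<and> (\<forall>u<n. \<forall>v<n. E u v \<longrightarrow> E v u)"

definition compl_graph :: "(nat \<Rightarrow> nat \<Rightarrow> bool) \<Rightarrow> nat \<Rightarrow> nat \<Rightarrow> bool" where
  "compl_graph E = (\<lambda>u v. u \<noteq> v \<and> \<not> E u v)"

definition k3 :: "nat \<Rightarrow> (nat \<Rightarrow> nat \<Rightarrow> bool) \<Rightarrow> nat" where
  "k3 n E = card {T. T \<subseteq> {..<n} \<and> card T = 3 \<and>
                     (\<forall>u\<in>T. \<forall>v\<in>T. u \<noteq> v \<longrightarrow> E u v)}"

definition realised_by :: "real \<Rightarrow> real \<Rightarrow> (nat \<Rightarrow> nat \<Rightarrow> nat \<Rightarrow> bool) \<Rightarrow> bool" where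
  "realised_by x y G \<longleftrightarrow>
     (\<forall>n. simple_graph_on n (G n)) \<and>
     ((\<lambda>n. real (k3 n (compl_graph (G n))) / real (n choose 3)) \<longlonglongrightarrow> x) \<and>
     ((\<lambda>n. real (k3 n (G n)) / real (n choose 3)) \<longlonglongrightarrow> y)"

definition Omega33 :: "(real \<times> real) set" where
  "Omega33 = {(x, y). x \<in> {0..1} \<and> y \<in> {0..1} \<and> (\<exists>G. realised_by x y G)}"

definition c33 :: "real \<Rightarrow> real" where
  "c33 x = Inf {y. (x, y) \<in> Omega33}"

end

theory Submission
  imports Defs "HOL-Real_Asymp.Real_Asymp"
begin

(*
  Lower bound (Goodman). Call a path v-u-w with centre u mixed if exactly one of uv, uw is an
  edge. A triple of distinct vertices spans a triangle in G or in its complement unless it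
  has exactly two mixed centres, and a vertex of degree d is the centre of d (n - 1 - d) <=
  (n - 1)^2 / 4 mixed paths. Hence k3(G) + k3(complement of G) >= (1/4 - o(1)) (n choose 3),
  so every realised pair satisfies x + y >= 1/4.

  Blow up the path 0-1-2-3 with loops at both ends into parts of relative sizes
  1/2 - q, q, q, 1/2 - q. Every vertex then has degree about n/2, so Goodman's bound is
  attained: the triangle densities of the graph and its complement tend to
  1/4 - (3q^2 - 4q^3) and 3q^2 - 4q^3, and 3q^2 - 4q^3 takes every value in [0, 1/4]
  for q in [0, 1/2].
*)

definition ordered_triangles :: "nat \<Rightarrow> (nat \<Rightarrow> nat \<Rightarrow> bool) \<Rightarrow> real" where
  "ordered_triangles n E = (\<Sum>u<n. \<Sum>v<n. \<Sum>w<n. of_bool (E u v \<and> E v w \<and> E u w))"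

lemma card_distinct_triples_spanning:
  assumes "card T = 3"
  shows "card {(u, v, w). u \<noteq> v \<and> v \<noteq> w \<and> u \<noteq> w \<and> {u, v, w} = T} = 6"
proof -
  obtain x y z where T: "T = {x, y, z}" "x \<noteq> y" "y \<noteq> z" "x \<noteq> z"
    using assms unfolding card_3_iff by blast
  have "{(u, v, w). u \<noteq> v \<and> v \<noteq> w \<and> u \<noteq> w \<and> {u, v, w} = T} =
      {(x, y, z), (x, z, y), (y, x, z), (y, z, x), (z, x, y), (z, y, x)}" (is "?L = ?R")
  proof
    show "?L \<subseteq> ?R"
    proof
      fix p assume "p \<in> ?L"
      then obtain u v w where p: "p = (u, v, w)" "u \<noteq> v" "v \<noteq> w" "u \<noteq> w" "{u, v, w} = T"
        by auto
      then have "u \<in> T" "v \<in> T" "w \<in> T"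
        by auto
      with p show "p \<in> ?R"
        unfolding T(1) by auto
    qed
    show "?R \<subseteq> ?L"
      using T by auto
  qed
  then show ?thesis
    using T by simp
qed

lemma ordered_triangles_eq_card:
  "ordered_triangles n E = card {(u, v, w). u < n \<and> v < n \<and> w < n \<and> E u v \<and> E v w \<and> E u w}"
proof -
  have "ordered_triangles n E = (\<Sum>p \<in> {..<n} \<times> {..<n} \<times> {..<n}.
      of_bool (case p of (u, v, w) \<Rightarrow> E u v \<and> E v w \<and> E u w))"
    unfolding ordered_triangles_def sum.cartesian_product by (simp add: case_prod_beta)
  also have "\<dots> = card {(u, v, w). u < n \<and> v < n \<and> w < n \<and> E u v \<and> E v w \<and> E u w}"
    by (subst sum_of_bool_eq) (auto intro!: arg_cong[where f = card])
  finally show ?thesis .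
qed

definition triangle_sets :: "nat \<Rightarrow> (nat \<Rightarrow> nat \<Rightarrow> bool) \<Rightarrow> nat set set" where
  "triangle_sets n E = {T. T \<subseteq> {..<n} \<and> card T = 3 \<and> (\<forall>u\<in>T. \<forall>v\<in>T. u \<noteq> v \<longrightarrow> E u v)}"

lemma ordered_triangle_iff:
  assumes "simple_graph_on n E"
  shows "u < n \<and> v < n \<and> w < n \<and> E u v \<and> E v w \<and> E u w \<longleftrightarrow>
    u \<noteq> v \<and> v \<noteq> w \<and> u \<noteq> w \<and> {u, v, w} \<in> triangle_sets n E"
proof
  assume uvw: "u < n \<and> v < n \<and> w < n \<and> E u v \<and> E v w \<and> E u w"
  then have "E v u" "E w v" "E w u" "u \<noteq> v" "v \<noteq> w" "u \<noteq> w"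
    using assms unfolding simple_graph_on_def by blast+
  with uvw show "u \<noteq> v \<and> v \<noteq> w \<and> u \<noteq> w \<and> {u, v, w} \<in> triangle_sets n E"
    unfolding triangle_sets_def by auto
next
  assume "u \<noteq> v \<and> v \<noteq> w \<and> u \<noteq> w \<and> {u, v, w} \<in> triangle_sets n E"
  then show "u < n \<and> v < n \<and> w < n \<and> E u v \<and> E v w \<and> E u w"
    unfolding triangle_sets_def by auto
qed

lemma ordered_triangles_eq_6_k3:
  assumes "simple_graph_on n E"
  shows "ordered_triangles n E = 6 * real (k3 n E)"
proof -
  let ?D = "{(u, v, w). u \<noteq> v \<and> v \<noteq> w \<and> u \<noteq> w \<and> {u, v, w} \<in> triangle_sets n E}"
  let ?vertices = "\<lambda>(u, v, w). {u, v, w}"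
  have "finite ?D"
    by (rule finite_subset[of _ "{..<n} \<times> {..<n} \<times> {..<n}"])
      (auto simp: ordered_triangle_iff[OF assms, symmetric])
  moreover have "finite (triangle_sets n E)"
    by (rule finite_subset[of _ "Pow {..<n}"]) (auto simp: triangle_sets_def)
  moreover have "?vertices ` ?D \<subseteq> triangle_sets n E"
    by auto
  ultimately have "card ?D = (\<Sum>T\<in>triangle_sets n E. card {p \<in> ?D. ?vertices p = T})"
    unfolding card_eq_sum by (rule sum.group[symmetric])
  also have "\<dots> = (\<Sum>T\<in>triangle_sets n E. 6)"
  proof (rule sum.cong)
    fix T assume T: "T \<in> triangle_sets n E"
    then have "{p \<in> ?D. ?vertices p = T} = {(u, v, w). u \<noteq> v \<and> v \<noteq> w \<and> u \<noteq> w \<and> {u, v, w} = T}"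
      by auto
    also have "card \<dots> = 6"
      using T by (intro card_distinct_triples_spanning) (simp add: triangle_sets_def)
    finally show "card {p \<in> ?D. ?vertices p = T} = 6" .
  qed simp
  finally show ?thesis
    unfolding ordered_triangles_eq_card ordered_triangle_iff[OF assms] k3_def
    by (simp add: triangle_sets_def)
qed

lemma real_choose_3: "real (n choose 3) = real n * (real n - 1) * (real n - 2) / 6"
  by (subst binomial_gbinomial)
    (simp add: gbinomial_pochhammer' numeral_3_eq_3 pochhammer_Suc field_simps)

lemma k3_density_eq:
  assumes "simple_graph_on n E"
  shows "real (k3 n E) / real (n choose 3) = ordered_triangles n E / (real n * (real n - 1) * (real n - 2))"
  using ordered_triangles_eq_6_k3[OF assms] by (simp add: real_choose_3)

lemma sum_degenerate_triples_le:
  "(\<Sum>u<n. \<Sum>v<n. \<Sum>w<n. of_bool (u = v \<or> v = w \<or> u = w) :: real) \<le> 3 * real n ^ 2"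
proof -
  have "(\<Sum>u<n. \<Sum>v<n. \<Sum>w<n. of_bool (u = v \<or> v = w \<or> u = w) :: real)
     \<le> (\<Sum>u<n. \<Sum>v<n. \<Sum>w<n. of_bool (u = v) + of_bool (v = w) + of_bool (u = w))"
    by (intro sum_mono) auto
  also have "\<dots> = 3 * real n ^ 2"
    by (simp add: sum.distrib power2_eq_square)
  finally show ?thesis .
qed

definition mixed_cherry :: "(nat \<Rightarrow> nat \<Rightarrow> bool) \<Rightarrow> nat \<Rightarrow> nat \<Rightarrow> nat \<Rightarrow> bool" where
  "mixed_cherry E u v w \<longleftrightarrow> u \<noteq> v \<and> v \<noteq> w \<and> u \<noteq> w \<and> E u v \<noteq> E u w"

lemma sum_mixed_cherries_at_le:
  assumes "\<not> E u u" and "u < n"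
  shows "(\<Sum>v<n. \<Sum>w<n. of_bool (mixed_cherry E u v w) :: real) \<le> (real n - 1) ^ 2 / 2"
proof -
  define d where "d = (\<Sum>v<n. of_bool (E u v) :: real)"
  define e where "e = (\<Sum>v<n. of_bool (v \<noteq> u \<and> \<not> E u v) :: real)"
  have split: "of_bool (mixed_cherry E u v w) =
      (of_bool (E u v) * of_bool (w \<noteq> u \<and> \<not> E u w) + of_bool (v \<noteq> u \<and> \<not> E u v) * of_bool (E u w) :: real)"
    for v w
    using assms(1) by (auto simp: mixed_cherry_def)
  have "(\<Sum>v<n. \<Sum>w<n. of_bool (mixed_cherry E u v w) :: real) = d * e + e * d"
    unfolding split d_def e_def by (simp only: sum.distrib sum_product)
  moreover have "d + e = (\<Sum>v<n. of_bool (v \<noteq> u) :: real)"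
    unfolding d_def e_def sum.distrib[symmetric] using assms(1) by (intro sum.cong) auto
  then have "d + e = real n - 1"
    using assms(2) by (simp add: Collect_neg_eq Diff_eq[symmetric] Int_commute)
  moreover have "4 * d * e \<le> (d + e) ^ 2"
    using sum_squares_ge_zero[of "d - e" 0] by (simp add: power2_eq_square algebra_simps)
  ultimately show ?thesis
    by simp
qed

lemma triple_monochromatic_or_two_mixed_cherries:
  fixes E :: "nat \<Rightarrow> nat \<Rightarrow> bool"
  assumes "E v u = E u v" "E w v = E v w" "E w u = E u w"
  shows "1 - of_bool (u = v \<or> v = w \<or> u = w) \<le>
    of_bool (E u v \<and> E v w \<and> E u w) +
    of_bool (compl_graph E u v \<and> compl_graph E v w \<and> compl_graph E u w) +
    (of_bool (mixed_cherry E u v w) + of_bool (mixed_cherry E v u w) +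
      of_bool (mixed_cherry E w u v)) / (2 :: real)"
  using assms unfolding mixed_cherry_def compl_graph_def
  by (cases "u = v \<or> v = w \<or> u = w"; cases "E u v"; cases "E v w"; cases "E u w") auto

lemma goodman_ordered_triangles:
  assumes "simple_graph_on n E"
  shows "real n ^ 3 - 3 * real n ^ 2 - 3/4 * real n * (real n - 1) ^ 2 \<le>
    ordered_triangles n E + ordered_triangles n (compl_graph E)"
proof -
  define c where "c u v w = (of_bool (mixed_cherry E u v w) :: real)" for u v w
  define C where "C = (\<Sum>u<n. \<Sum>v<n. \<Sum>w<n. c u v w)"
  have "(\<Sum>u<n. \<Sum>v<n. \<Sum>w<n. 1 - of_bool (u = v \<or> v = w \<or> u = w) :: real) \<le>
    (\<Sum>u<n. \<Sum>v<n. \<Sum>w<n. of_bool (E u v \<and> E v w \<and> E u w) +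
      of_bool (compl_graph E u v \<and> compl_graph E v w \<and> compl_graph E u w) +
      (c u v w + c v u w + c w u v) / 2)"
    unfolding c_def using assms
    by (intro sum_mono triple_monochromatic_or_two_mixed_cherries) (auto simp: simple_graph_on_def)
  also have "\<dots> = ordered_triangles n E + ordered_triangles n (compl_graph E) +
      ((\<Sum>u<n. \<Sum>v<n. \<Sum>w<n. c u v w) + (\<Sum>u<n. \<Sum>v<n. \<Sum>w<n. c v u w) +
        (\<Sum>u<n. \<Sum>v<n. \<Sum>w<n. c w u v)) / 2"
    unfolding ordered_triangles_def by (simp only: sum.distrib sum_divide_distrib[symmetric])
  also have "(\<Sum>u<n. \<Sum>v<n. \<Sum>w<n. c v u w) = C"
    unfolding C_def by (rule sum.swap)
  also have "(\<Sum>u<n. \<Sum>v<n. \<Sum>w<n. c w u v) = (\<Sum>u<n. \<Sum>w<n. \<Sum>v<n. c w u v)"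
    by (intro sum.cong refl sum.swap)
  also have "\<dots> = C"
    unfolding C_def by (rule sum.swap)
  finally have "(\<Sum>u<n. \<Sum>v<n. \<Sum>w<n. 1 - of_bool (u = v \<or> v = w \<or> u = w) :: real) \<le>
      ordered_triangles n E + ordered_triangles n (compl_graph E) + 3 * C / 2"
    unfolding C_def by simp
  moreover have "(\<Sum>u<n. \<Sum>v<n. \<Sum>w<n. 1 - of_bool (u = v \<or> v = w \<or> u = w) :: real) \<ge>
      real n ^ 3 - 3 * real n ^ 2"
    using sum_degenerate_triples_le[of n] by (simp add: sum_subtractf power3_eq_cube)
  moreover have "C \<le> (\<Sum>u<n. (real n - 1) ^ 2 / 2)"
    unfolding C_def c_def using assms
    by (intro sum_mono sum_mixed_cherries_at_le) (auto simp: simple_graph_on_def)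
  ultimately show ?thesis
    by simp
qed

lemma simple_graph_on_compl_graph: "simple_graph_on n E \<Longrightarrow> simple_graph_on n (compl_graph E)"
  unfolding simple_graph_on_def compl_graph_def by auto

lemma realised_by_imp_quarter_le_sum:
  assumes "realised_by x y G"
  shows "1/4 \<le> x + y"
proof -
  have G: "simple_graph_on n (G n)" for n
    using assms unfolding realised_by_def by simp
  let ?density = "\<lambda>n E. real (k3 n E) / real (n choose 3)"
  have "(\<lambda>n. ?density n (compl_graph (G n)) + ?density n (G n)) \<longlonglongrightarrow> x + y"
    using assms unfolding realised_by_def by (intro tendsto_add) auto
  moreover have "(\<lambda>n. (real n ^ 3 - 3 * real n ^ 2 - 3/4 * real n * (real n - 1) ^ 2) /
      (real n * (real n - 1) * (real n - 2))) \<longlonglongrightarrow> 1/4"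
    by real_asymp
  moreover have "\<forall>\<^sub>F n in sequentially.
      (real n ^ 3 - 3 * real n ^ 2 - 3/4 * real n * (real n - 1) ^ 2) /
        (real n * (real n - 1) * (real n - 2)) \<le>
      ?density n (compl_graph (G n)) + ?density n (G n)"
    using eventually_gt_at_top[of 2]
  proof (rule eventually_mono)
    fix n :: nat assume "2 < n"
    then have "0 < real n * (real n - 1) * (real n - 2)"
      by simp
    then show "(real n ^ 3 - 3 * real n ^ 2 - 3/4 * real n * (real n - 1) ^ 2) /
        (real n * (real n - 1) * (real n - 2)) \<le> ?density n (compl_graph (G n)) + ?density n (G n)"
      unfolding k3_density_eq[OF G] k3_density_eq[OF simple_graph_on_compl_graph[OF G]]
        add_divide_distrib[symmetric]
      using goodman_ordered_triangles[OF G, of n] by (intro divide_right_mono) auto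
  qed
  ultimately show ?thesis
    by (rule tendsto_le[OF trivial_limit_sequentially])
qed

lemma k3_density_tendsto_if_ordered_triangles:
  assumes "\<And>n. simple_graph_on n (E n)"
    and "(\<lambda>n. ordered_triangles n (E n) / real n ^ 3) \<longlonglongrightarrow> L"
  shows "(\<lambda>n. real (k3 n (E n)) / real (n choose 3)) \<longlonglongrightarrow> L"
proof -
  have "(\<lambda>n. real n ^ 3 / (real n * (real n - 1) * (real n - 2))) \<longlonglongrightarrow> 1"
    by real_asymp
  with assms(2) have "(\<lambda>n. ordered_triangles n (E n) / real n ^ 3 *
      (real n ^ 3 / (real n * (real n - 1) * (real n - 2)))) \<longlonglongrightarrow> L"
    using tendsto_mult by fastforce
  moreover have "\<forall>\<^sub>F n in sequentially.
      ordered_triangles n (E n) / real n ^ 3 * (real n ^ 3 / (real n * (real n - 1) * (real n - 2))) =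
      real (k3 n (E n)) / real (n choose 3)"
    using eventually_gt_at_top[of 0]
    by (rule eventually_mono) (simp add: k3_density_eq[OF assms(1)])
  ultimately show ?thesis
    by (rule Lim_transform_eventually)
qed

definition blowup :: "(nat \<Rightarrow> nat \<Rightarrow> bool) \<Rightarrow> (nat \<Rightarrow> nat) \<Rightarrow> nat \<Rightarrow> nat \<Rightarrow> bool" where
  "blowup R t u v \<longleftrightarrow> u \<noteq> v \<and> R (t u) (t v)"

lemma simple_graph_on_blowup:
  assumes "\<And>i j. R i j \<Longrightarrow> R j i"
  shows "simple_graph_on n (blowup R t)"
  using assms unfolding simple_graph_on_def blowup_def by auto

lemma compl_graph_blowup: "compl_graph (blowup R t) = blowup (\<lambda>i j. \<not> R i j) t"
  unfolding compl_graph_def blowup_def by auto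

definition weighted_triangle_density :: "nat set \<Rightarrow> (nat \<Rightarrow> real) \<Rightarrow> (nat \<Rightarrow> nat \<Rightarrow> bool) \<Rightarrow> real" where
  "weighted_triangle_density T \<alpha> R =
    (\<Sum>i\<in>T. \<Sum>j\<in>T. \<Sum>k\<in>T. \<alpha> i * \<alpha> j * \<alpha> k * of_bool (R i j \<and> R j k \<and> R i k))"

lemma sum_comp_eq_sum_card_fibres:
  fixes g :: "'b \<Rightarrow> real"
  assumes "finite A" "finite T" "t ` A \<subseteq> T"
  shows "(\<Sum>a\<in>A. g (t a)) = (\<Sum>i\<in>T. real (card {a\<in>A. t a = i}) * g i)"
proof -
  have "(\<Sum>a\<in>A. g (t a)) = (\<Sum>i\<in>T. \<Sum>a\<in>{a\<in>A. t a = i}. g (t a))"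
    using sum.group[OF assms, of "\<lambda>a. g (t a)"] by simp
  also have "\<dots> = (\<Sum>i\<in>T. \<Sum>a\<in>{a\<in>A. t a = i}. g i)"
    by (intro sum.cong) auto
  finally show ?thesis
    by simp
qed

lemma sum_triples_comp_eq_sum_card_fibres:
  fixes F :: "'b \<Rightarrow> 'b \<Rightarrow> 'b \<Rightarrow> real"
  assumes "finite A" "finite T" "t ` A \<subseteq> T"
  defines "N i \<equiv> real (card {a\<in>A. t a = i})"
  shows "(\<Sum>u\<in>A. \<Sum>v\<in>A. \<Sum>w\<in>A. F (t u) (t v) (t w)) =
    (\<Sum>i\<in>T. \<Sum>j\<in>T. \<Sum>k\<in>T. N i * N j * N k * F i j k)"
proof -
  note fibres = sum_comp_eq_sum_card_fibres[OF assms(1-3), folded N_def]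
  have "(\<Sum>u\<in>A. \<Sum>v\<in>A. \<Sum>w\<in>A. F (t u) (t v) (t w)) =
      (\<Sum>u\<in>A. \<Sum>v\<in>A. \<Sum>k\<in>T. N k * F (t u) (t v) k)"
    by (simp only: fibres)
  also have "\<dots> = (\<Sum>u\<in>A. \<Sum>j\<in>T. N j * (\<Sum>k\<in>T. N k * F (t u) j k))"
    by (simp only: fibres[of "\<lambda>j. \<Sum>k\<in>T. N k * F _ j k"])
  also have "\<dots> = (\<Sum>i\<in>T. N i * (\<Sum>j\<in>T. N j * (\<Sum>k\<in>T. N k * F i j k)))"
    by (simp only: fibres[of "\<lambda>i. \<Sum>j\<in>T. N j * (\<Sum>k\<in>T. N k * F i j k)"])
  finally show ?thesis
    by (simp add: sum_distrib_left mult.assoc)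
qed

lemma sum_pattern_triples_eq_weighted_density:
  assumes "finite T" "t ` {..<n} \<subseteq> T"
  shows "(\<Sum>u<n. \<Sum>v<n. \<Sum>w<n. of_bool (R (t u) (t v) \<and> R (t v) (t w) \<and> R (t u) (t w))) / real n ^ 3 =
    weighted_triangle_density T (\<lambda>i. real (card {v\<in>{..<n}. t v = i}) / real n) R"
proof -
  have fibres: "(\<Sum>u<n. \<Sum>v<n. \<Sum>w<n. of_bool (R (t u) (t v) \<and> R (t v) (t w) \<and> R (t u) (t w))) =
    (\<Sum>i\<in>T. \<Sum>j\<in>T. \<Sum>k\<in>T. real (card {v\<in>{..<n}. t v = i}) * real (card {v\<in>{..<n}. t v = j}) *
      real (card {v\<in>{..<n}. t v = k}) * of_bool (R i j \<and> R j k \<and> R i k))"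
    using assms
    by (rule sum_triples_comp_eq_sum_card_fibres[OF finite_lessThan, where F = "\<lambda>i j k. of_bool (R i j \<and> R j k \<and> R i k)"])
  show ?thesis
    unfolding fibres weighted_triangle_density_def sum_divide_distrib
    by (intro sum.cong refl) (simp add: power3_eq_cube)
qed

lemma ordered_triangles_blowup_approx:
  "\<bar>ordered_triangles n (blowup R t) -
    (\<Sum>u<n. \<Sum>v<n. \<Sum>w<n. of_bool (R (t u) (t v) \<and> R (t v) (t w) \<and> R (t u) (t w)))\<bar> \<le> 3 * real n ^ 2"
proof -
  let ?S = "\<Sum>u<n. \<Sum>v<n. \<Sum>w<n. of_bool (R (t u) (t v) \<and> R (t v) (t w) \<and> R (t u) (t w)) :: real"
  have "?S - (\<Sum>u<n. \<Sum>v<n. \<Sum>w<n. of_bool (u = v \<or> v = w \<or> u = w)) =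
      (\<Sum>u<n. \<Sum>v<n. \<Sum>w<n. of_bool (R (t u) (t v) \<and> R (t v) (t w) \<and> R (t u) (t w)) -
        of_bool (u = v \<or> v = w \<or> u = w))"
    by (simp only: sum_subtractf)
  also have "\<dots> \<le> ordered_triangles n (blowup R t)"
    unfolding ordered_triangles_def blowup_def by (intro sum_mono) auto
  moreover have "ordered_triangles n (blowup R t) \<le> ?S"
    unfolding ordered_triangles_def blowup_def by (intro sum_mono) auto
  ultimately show ?thesis
    using sum_degenerate_triples_le[of n] by linarith
qed

lemma k3_density_blowup_tendsto:
  assumes "finite T" and "\<And>n. t n ` {..<n} \<subseteq> T"
    and "\<And>i. i \<in> T \<Longrightarrow> (\<lambda>n. real (card {v\<in>{..<n}. t n v = i}) / real n) \<longlonglongrightarrow> \<alpha> i"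
    and "\<And>i j. R i j \<Longrightarrow> R j i"
  shows "(\<lambda>n. real (k3 n (blowup R (t n))) / real (n choose 3)) \<longlonglongrightarrow> weighted_triangle_density T \<alpha> R"
proof (rule k3_density_tendsto_if_ordered_triangles)
  show "simple_graph_on n (blowup R (t n))" for n
    using assms(4) by (rule simple_graph_on_blowup)
  define P where "P n = (\<Sum>u<n. \<Sum>v<n. \<Sum>w<n.
      of_bool (R (t n u) (t n v) \<and> R (t n v) (t n w) \<and> R (t n u) (t n w)) :: real)" for n
  define S where "S n = P n / real n ^ 3" for n
  have "S \<longlonglongrightarrow> weighted_triangle_density T \<alpha> R"
    unfolding S_def P_def sum_pattern_triples_eq_weighted_density[OF assms(1,2)] weighted_triangle_density_def
    by (intro tendsto_sum tendsto_mult tendsto_const assms(3))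
  moreover have "(\<lambda>n. ordered_triangles n (blowup R (t n)) / real n ^ 3 - S n) \<longlonglongrightarrow> 0"
  proof (rule tendsto_0_le[where K = 3])
    show "(\<lambda>n. 1 / real n) \<longlonglongrightarrow> 0"
      by real_asymp
    show "\<forall>\<^sub>F n in sequentially. norm (ordered_triangles n (blowup R (t n)) / real n ^ 3 - S n) \<le>
        norm (1 / real n) * 3"
      using eventually_gt_at_top[of 0]
    proof (rule eventually_mono)
      fix n :: nat assume "0 < n"
      have "norm (ordered_triangles n (blowup R (t n)) / real n ^ 3 - S n) =
          \<bar>ordered_triangles n (blowup R (t n)) - P n\<bar> / real n ^ 3"
        unfolding S_def real_norm_def diff_divide_distrib[symmetric] abs_divide by simp
      also have "\<dots> \<le> 3 * real n ^ 2 / real n ^ 3"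
        unfolding P_def by (intro divide_right_mono ordered_triangles_blowup_approx) simp
      also have "\<dots> = norm (1 / real n) * 3"
        using \<open>0 < n\<close> by (simp add: power2_eq_square power3_eq_cube)
      finally show "norm (ordered_triangles n (blowup R (t n)) / real n ^ 3 - S n) \<le> norm (1 / real n) * 3" .
    qed
  qed
  ultimately show "(\<lambda>n. ordered_triangles n (blowup R (t n)) / real n ^ 3) \<longlonglongrightarrow> weighted_triangle_density T \<alpha> R"
    by (rule Lim_transform)
qed

lemma ceiling_scaled_tendsto: "(\<lambda>n. of_int \<lceil>c * real n\<rceil> / real n) \<longlonglongrightarrow> c"
proof (rule tendsto_sandwich)
  show "\<forall>\<^sub>F n in sequentially. c \<le> of_int \<lceil>c * real n\<rceil> / real n"
    using eventually_gt_at_top[of 0]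
    by (rule eventually_mono) (simp add: le_divide_eq)
  show "\<forall>\<^sub>F n in sequentially. of_int \<lceil>c * real n\<rceil> / real n \<le> c + 1 / real n"
    using eventually_gt_at_top[of 0]
    by (rule eventually_mono) (simp add: divide_le_eq distrib_right)
  show "(\<lambda>n. c) \<longlonglongrightarrow> c"
    by simp
  show "(\<lambda>n. c + 1 / real n) \<longlonglongrightarrow> c"
    by real_asymp
qed

lemma card_scaled_interval_tendsto:
  assumes "0 \<le> a" "a \<le> b" "b \<le> 1"
  shows "(\<lambda>n. real (card {v\<in>{..<n}. a * real n \<le> real v \<and> real v < b * real n}) / real n) \<longlonglongrightarrow> b - a"
proof -
  have "real (card {v\<in>{..<n}. a * real n \<le> real v \<and> real v < b * real n}) =
      of_int \<lceil>b * real n\<rceil> - of_int \<lceil>a * real n\<rceil>" for n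
  proof -
    have "b * real n \<le> real n"
      using assms by (simp add: mult_left_le_one_le)
    then have "{v\<in>{..<n}. a * real n \<le> real v \<and> real v < b * real n} =
        {nat \<lceil>a * real n\<rceil>..<nat \<lceil>b * real n\<rceil>}"
      by (auto simp: nat_le_iff ceiling_le_iff zless_nat_eq_int_zless less_ceiling_iff)
    moreover have "0 \<le> a * real n" "a * real n \<le> b * real n"
      using assms by (simp_all add: mult_right_mono)
    then have "0 \<le> \<lceil>a * real n\<rceil>" "\<lceil>a * real n\<rceil> \<le> \<lceil>b * real n\<rceil>"
      by (simp_all add: ceiling_mono)
    then have "real (nat \<lceil>b * real n\<rceil> - nat \<lceil>a * real n\<rceil>) = of_int \<lceil>b * real n\<rceil> - of_int \<lceil>a * real n\<rceil>"
      by (metis nat_diff_distrib of_int_diff of_nat_nat diff_ge_0_iff_ge order.trans)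
    ultimately show ?thesis
      by simp
  qed
  moreover have "(\<lambda>n. of_int \<lceil>b * real n\<rceil> / real n - of_int \<lceil>a * real n\<rceil> / real n) \<longlonglongrightarrow> b - a"
    by (intro tendsto_diff ceiling_scaled_tendsto)
  ultimately show ?thesis
    by (simp add: diff_divide_distrib)
qed

definition looped_path :: "nat \<Rightarrow> nat \<Rightarrow> bool" where
  "looped_path i j \<longleftrightarrow> (i = j \<and> (i = 0 \<or> i = 3)) \<or> j = Suc i \<or> i = Suc j"

definition path_part :: "real \<Rightarrow> nat \<Rightarrow> nat \<Rightarrow> nat" where
  "path_part q n v =
    (if real v < (1/2 - q) * real n then 0 else if real v < 1/2 * real n then 1
     else if real v < (1/2 + q) * real n then 2 else 3)"

definition path_weight :: "real \<Rightarrow> nat \<Rightarrow> real" where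
  "path_weight q i = (if i = 0 \<or> i = 3 then 1/2 - q else q)"

lemma weighted_triangle_density_looped_path:
  "weighted_triangle_density {0..3} (path_weight q) looped_path = 1/4 - (3 * q^2 - 4 * q^3)"
  by (simp add: weighted_triangle_density_def path_weight_def looped_path_def numeral_3_eq_3)
    (simp add: power2_eq_square power3_eq_cube field_simps)

lemma weighted_triangle_density_not_looped_path:
  "weighted_triangle_density {0..3} (path_weight q) (\<lambda>i j. \<not> looped_path i j) = 3 * q^2 - 4 * q^3"
  by (simp add: weighted_triangle_density_def path_weight_def looped_path_def numeral_3_eq_3)
    (simp add: power2_eq_square power3_eq_cube field_simps)

lemma card_path_part_tendsto:
  assumes "0 \<le> q" "q \<le> 1/2" "i \<in> {0..3}"
  shows "(\<lambda>n. real (card {v\<in>{..<n}. path_part q n v = i}) / real n) \<longlonglongrightarrow> path_weight q i"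
proof -
  let ?part = "\<lambda>n a b. {v\<in>{..<n}. a * real n \<le> real v \<and> real v < b * real n}"
  have thresholds: "(1/2 - q) * real n \<le> 1/2 * real n" "1/2 * real n \<le> (1/2 + q) * real n"
    "(1/2 + q) * real n \<le> 1 * real n" for n
    using assms by (intro mult_right_mono; simp)+
  consider "i = 0" | "i = 1" | "i = 2" | "i = 3"
    using assms(3) by fastforce
  then show ?thesis
  proof cases
    case 1
    then have "{v\<in>{..<n}. path_part q n v = i} = ?part n 0 (1/2 - q)" for n
      by (auto simp: path_part_def)
    then show ?thesis
      using card_scaled_interval_tendsto[of 0 "1/2 - q"] assms 1 by (simp add: path_weight_def)
  next
    case 2
    then have "{v\<in>{..<n}. path_part q n v = i} = ?part n (1/2 - q) (1/2)" for n
      by (auto simp: path_part_def)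
    then show ?thesis
      using card_scaled_interval_tendsto[of "1/2 - q" "1/2"] assms 2 by (simp add: path_weight_def)
  next
    case 3
    then have "{v\<in>{..<n}. path_part q n v = i} = ?part n (1/2) (1/2 + q)" for n
      using thresholds[of n] by (auto simp: path_part_def)
    then show ?thesis
      using card_scaled_interval_tendsto[of "1/2" "1/2 + q"] assms 3 by (simp add: path_weight_def)
  next
    case 4
    then have "{v\<in>{..<n}. path_part q n v = i} = ?part n (1/2 + q) 1" for n
      using thresholds[of n] by (auto simp: path_part_def)
    then show ?thesis
      using card_scaled_interval_tendsto[of "1/2 + q" 1] assms 4 by (simp add: path_weight_def)
  qed
qed

lemma realised_by_looped_path_blowup:
  assumes "0 \<le> q" "q \<le> 1/2"
  shows "realised_by (3 * q^2 - 4 * q^3) (1/4 - (3 * q^2 - 4 * q^3))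
    (\<lambda>n. blowup looped_path (path_part q n))"
proof -
  have parts: "path_part q n ` {..<n} \<subseteq> {0..3}" for n
    by (auto simp: path_part_def)
  have sym: "looped_path j i" if "looped_path i j" for i j
    using that unfolding looped_path_def by auto
  have tendsto: "(\<lambda>n. real (k3 n (blowup R (path_part q n))) / real (n choose 3))
      \<longlonglongrightarrow> weighted_triangle_density {0..3} (path_weight q) R"
    if "\<And>i j. R i j \<Longrightarrow> R j i" for R
    using finite_atLeastAtMost parts card_path_part_tendsto[OF assms] that
    by (rule k3_density_blowup_tendsto)
  show ?thesis
    unfolding realised_by_def compl_graph_blowup
  proof (intro conjI allI)
    show "simple_graph_on n (blowup looped_path (path_part q n))" for n
      using sym by (rule simple_graph_on_blowup)
    show "(\<lambda>n. real (k3 n (blowup (\<lambda>i j. \<not> looped_path i j) (path_part q n))) / real (n choose 3))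
        \<longlonglongrightarrow> 3 * q^2 - 4 * q^3"
      using tendsto[of "\<lambda>i j. \<not> looped_path i j"] sym
      unfolding weighted_triangle_density_not_looped_path by blast
    show "(\<lambda>n. real (k3 n (blowup looped_path (path_part q n))) / real (n choose 3))
        \<longlonglongrightarrow> 1/4 - (3 * q^2 - 4 * q^3)"
      using tendsto[of looped_path] sym
      unfolding weighted_triangle_density_looped_path by blast
  qed
qed

theorem lemma2p3:
  fixes x :: real
  assumes "0 \<le> x" and "x \<le> 1/4"
  shows "c33 x = 1/4 - x"
proof -
  have "\<exists>q\<ge>0. q \<le> 1/2 \<and> 3 * q^2 - 4 * q^3 = x"
    using assms by (intro IVT'[of "\<lambda>q. 3 * q^2 - 4 * q^3"] continuous_intros) (simp_all add: power_divide)
  then obtain q where q: "0 \<le> q" "q \<le> 1/2" "3 * q^2 - 4 * q^3 = x"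
    by blast
  have "(x, 1/4 - x) \<in> Omega33"
    using realised_by_looped_path_blowup[OF q(1,2)] q(3) assms unfolding Omega33_def by auto
  moreover have "1/4 - x \<le> y" if "(x, y) \<in> Omega33" for y
    using that realised_by_imp_quarter_le_sum unfolding Omega33_def by force
  ultimately show ?thesis
    unfolding c33_def by (intro cInf_eq_minimum) auto
qed

end
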